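(* Let $k=1$ and let $Y$ be uniformly distributed on $\mathcal{Y}=\{y_1,\dots,y_m\}$ with $y_1\ge y_2\ge\dots\ge y_m$ distinct. Consider the "reversal" encoding scheme with $r=m$ symbols, $\sigma_1(y_j)=\tau_j$ and $\sigma_2(y_j)=\tau_{m+1-j}$ for all $j\in[m]$. Then (1) this scheme maximizes the eavesdropper distortion $D_{ach}(1)$ over all encoding schemes with one key bit; (2) if $\mathcal{Y}$ is regularly spaced, i.e. $\mathcal{Y}=\{y,y+d,\dots,y+(m-1)d\}$ for some $y,d\in\mathbb{R}$, then this scheme achieves $D_{ach}(1)=D_{max}$.
   Context: Single-source setting. $Y$ is a real random variable taking values in a finite set $\mathcal{Y}=\{y_1,\dots,y_m\}\subset\mathbb{R}$ of distinct values. A source and a receiver share a secret key $K$, uniform on $\{1,\dots,2^k\}$ and independent of $Y$. An encoding scheme consists of a finite set of transmission symbols $\{\tau_1,\dots,\tau_r\}$ together with, for each key value $i\in\{1,\dots,2^k\}$, an injective map $\sigma_i:\mathcal{Y}\to\{\tau_1,\dots,\tau_r\}$; the source transmits $T=\sigma_K(Y)$. An eavesdropper observes $T$ but not $K$. Her distortion is $D_{ach}(k)=\min_{\hat f}\mathbb{E}[(Y-\hat f(T))^2]$ (minimum over all functions of the observed symbol), and $D_{max}=\mathrm{var}(Y)$. *)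

theory Defs
  imports Complex_Main
begin

definition is_scheme :: "nat \<Rightarrow> nat \<Rightarrow> nat \<Rightarrow> (nat \<Rightarrow> nat \<Rightarrow> nat) \<Rightarrow> bool" where
  "is_scheme k m r \<sigma> \<longleftrightarrow>
     (\<forall>i\<in>{1..2^k}. inj_on (\<sigma> i) {1..m} \<and> \<sigma> i ` {1..m} \<subseteq> {1..r})"

text \<open>Expected squared error of an estimator f of Y from T = sigma K (Y),
  with (K,Y) uniform on {1..2^k} x {1..m}.\<close>
definition mse :: "nat \<Rightarrow> (nat \<Rightarrow> real) \<Rightarrow> nat \<Rightarrow> (nat \<Rightarrow> nat \<Rightarrow> nat) \<Rightarrow> (nat \<Rightarrow> real) \<Rightarrow> real" where
  "mse k y m \<sigma> f =
     (\<Sum>i\<in>{1..2^k}. \<Sum>j\<in>{1..m}. (y j - f (\<sigma> i j))\<^sup>2) / (2 ^ k * real m)"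

text \<open>Eavesdropper distortion: minimum (infimum, which is attained) over all
  estimators f of the observed symbol.\<close>
definition D_ach :: "nat \<Rightarrow> (nat \<Rightarrow> real) \<Rightarrow> nat \<Rightarrow> (nat \<Rightarrow> nat \<Rightarrow> nat) \<Rightarrow> real" where
  "D_ach k y m \<sigma> = (INF f :: nat \<Rightarrow> real. mse k y m \<sigma> f)"

definition D_max :: "(nat \<Rightarrow> real) \<Rightarrow> nat \<Rightarrow> real" where
  "D_max y m =
     (let \<mu> = (\<Sum>j\<in>{1..m}. y j) / real m
      in (\<Sum>j\<in>{1..m}. (y j - \<mu>)\<^sup>2) / real m)"

definition reversal :: "nat \<Rightarrow> nat \<Rightarrow> nat \<Rightarrow> nat" where
  "reversal m i j = (if i = 1 then j else m + 1 - j)"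

end

theory Submission
  imports Defs
begin

text \<open>
  With one key bit, let the eavesdropper output the midpoint of the two values sent to the
  observed symbol by the two keys, and the value itself when only one key uses the symbol.
  Her mean squared error is then the sum of \<open>(y j - y l)\<^sup>2\<close> over the pairs \<open>(j, l)\<close> sharing
  a symbol, divided by \<open>4 m\<close>. These pairs form a partial matching of \<open>{1..m}\<close>, and for a
  monotone sequence the reversal matching \<open>j \<mapsto> m + 1 - j\<close> maximises the sum of squared gaps:
  by weak LP duality it suffices to find a potential \<open>u\<close> with
  \<open>(y j - y l)\<^sup>2 \<le> 2 (u j + u l)\<close> for all \<open>j, l\<close> and equality on reversed pairs, and such a
  potential is built inductively by peeling off the outermost pair. For the reversal scheme
  the midpoint estimator is optimal, so its distortion is exactly this maximum.

  A regularly spaced set is symmetric about its mean, so each reversal gap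
  \<open>y j - y (m + 1 - j)\<close> is twice the deviation of \<open>y j\<close> from the mean, which gives
  \<open>D_ach = D_max\<close>.
\<close>

definition gap_potential :: "(nat \<Rightarrow> real) \<Rightarrow> nat set \<Rightarrow> (nat \<Rightarrow> real) \<Rightarrow> bool" where
  "gap_potential y A u \<longleftrightarrow> (\<forall>j\<in>A. \<forall>l\<in>A. (y j - y l)\<^sup>2 \<le> 2 * (u j + u l))"

lemma gap_potential_nonneg: "gap_potential y A u \<Longrightarrow> j \<in> A \<Longrightarrow> 0 \<le> u j"
  unfolding gap_potential_def by fastforce

lemma square_gap_exchange:
  fixes lo hi c l :: real
  assumes "lo \<le> c" "c \<le> hi" "lo \<le> l" "l \<le> hi"
  shows "(hi - c)\<^sup>2 + (lo - l)\<^sup>2 \<le> (hi - lo)\<^sup>2 + (c - l)\<^sup>2"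
proof -
  have "(hi - lo)\<^sup>2 + (c - l)\<^sup>2 - ((hi - c)\<^sup>2 + (lo - l)\<^sup>2) = 2 * ((c - lo) * (hi - l))"
    by (simp add: power2_eq_square algebra_simps)
  moreover have "0 \<le> (c - lo) * (hi - l)"
    using assms by simp
  ultimately show ?thesis
    by linarith
qed

lemma antimono_on_between:
  fixes y :: "nat \<Rightarrow> real"
  assumes "antimono_on {a..b} y" "l \<in> {a..b}"
  shows "y b \<le> y l \<and> y l \<le> y a"
  using assms monotone_onD[OF assms(1), of l b] monotone_onD[OF assms(1), of a l] by auto

lemma gap_potential_exchange:
  fixes y u :: "nat \<Rightarrow> real"
  assumes anti: "antimono_on {a..b} y" and pot: "gap_potential y {a<..<b} u"
    and "c \<in> {a<..<b}" "l \<in> {a<..<b}"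
  shows "(y a - y c)\<^sup>2 + (y b - y l)\<^sup>2 \<le> (y a - y b)\<^sup>2 + 2 * (u c + u l)"
proof -
  have "(y a - y c)\<^sup>2 + (y b - y l)\<^sup>2 \<le> (y a - y b)\<^sup>2 + (y c - y l)\<^sup>2"
    using antimono_on_between[OF anti, of c] antimono_on_between[OF anti, of l] assms(3,4)
    by (intro square_gap_exchange) auto
  moreover have "(y c - y l)\<^sup>2 \<le> 2 * (u c + u l)"
    using pot assms(3,4) by (auto simp: gap_potential_def)
  ultimately show ?thesis
    by simp
qed

lemma gap_potential_endpoint_weights:
  fixes y u :: "nat \<Rightarrow> real"
  assumes "a < b" and anti: "antimono_on {a..b} y" and pot: "gap_potential y {a<..<b} u"
  obtains wa wb where "0 \<le> wa" "0 \<le> wb" "2 * (wa + wb) = (y a - y b)\<^sup>2"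
    "\<forall>l\<in>{a<..<b}. (y a - y l)\<^sup>2 \<le> 2 * (wa + u l)"
    "\<forall>l\<in>{a<..<b}. (y b - y l)\<^sup>2 \<le> 2 * (wb + u l)"
proof -
  define I where "I = {a<..<b}"
  \<comment> \<open>the least weight for \<open>a\<close>; the exchange inequality shows that the rest of
    \<open>(y a - y b)\<^sup>2 / 2\<close> is enough for \<open>b\<close>\<close>
  define wa where "wa = Max (insert 0 ((\<lambda>l. (y a - y l)\<^sup>2 / 2 - u l) ` I))"
  define wb where "wb = (y a - y b)\<^sup>2 / 2 - wa"
  have u_nonneg: "0 \<le> u l" if "l \<in> I" for l
    using gap_potential_nonneg[OF pot] that by (simp add: I_def)
  have wa_ge: "x \<le> wa" if "x \<in> insert 0 ((\<lambda>l. (y a - y l)\<^sup>2 / 2 - u l) ` I)" for x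
    unfolding wa_def I_def using that by (intro Max_ge) (auto simp: I_def)
  have wa_bound: "(y a - y l)\<^sup>2 \<le> 2 * (wa + u l)" if "l \<in> I" for l
    using wa_ge[of "(y a - y l)\<^sup>2 / 2 - u l"] that by simp
  have "wa \<in> insert 0 ((\<lambda>l. (y a - y l)\<^sup>2 / 2 - u l) ` I)"
    unfolding wa_def I_def by (intro Max_in) auto
  then consider "wa = 0" | c where "c \<in> I" "wa = (y a - y c)\<^sup>2 / 2 - u c"
    by blast
  then have "0 \<le> wb \<and> (\<forall>l\<in>I. (y b - y l)\<^sup>2 \<le> 2 * (wb + u l))"
  proof cases
    case 1
    have "(y b - y l)\<^sup>2 \<le> (y a - y b)\<^sup>2" if "l \<in> I" for l
      using antimono_on_between[OF anti, of l] that
      by (simp add: I_def power2_commute[of "y b"] power_mono)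
    with u_nonneg show ?thesis
      by (fastforce simp: wb_def 1)
  next
    case 2
    have "(y a - y c)\<^sup>2 \<le> (y a - y b)\<^sup>2"
      using antimono_on_between[OF anti, of c] 2(1) by (simp add: I_def power_mono)
    with u_nonneg[OF 2(1)] gap_potential_exchange[OF anti pot, of c] 2 show ?thesis
      by (fastforce simp: wb_def I_def)
  qed
  moreover have "0 \<le> wa"
    using wa_ge by simp
  ultimately show ?thesis
    using wa_bound by (intro that[of wa wb]) (auto simp: wb_def I_def)
qed

lemma gap_potential_extend:
  fixes y u :: "nat \<Rightarrow> real"
  assumes "a < b" and "antimono_on {a..b} y" and pot: "gap_potential y {a<..<b} u"
  obtains v where "gap_potential y {a..b} v" "2 * (v a + v b) = (y a - y b)\<^sup>2"
    "\<forall>l\<in>{a<..<b}. v l = u l"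
proof -
  obtain wa wb where w: "0 \<le> wa" "0 \<le> wb" "2 * (wa + wb) = (y a - y b)\<^sup>2"
    "\<forall>l\<in>{a<..<b}. (y a - y l)\<^sup>2 \<le> 2 * (wa + u l)"
    "\<forall>l\<in>{a<..<b}. (y b - y l)\<^sup>2 \<le> 2 * (wb + u l)"
    using gap_potential_endpoint_weights[OF assms] .
  define v where "v = u(a := wa, b := wb)"
  have split: "{a..b} = {a, b} \<union> {a<..<b}"
    using \<open>a < b\<close> by auto
  have v_inner: "\<forall>l\<in>{a<..<b}. v l = u l"
    by (simp add: v_def)
  have outer: "(y j - y l)\<^sup>2 \<le> 2 * (v j + v l)" if "j \<in> {a, b}" "l \<in> {a..b}" for j l
    using that \<open>a < b\<close> w v_inner
    by (auto simp: split v_def power2_commute[of "y b"] add.commute)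
  have "gap_potential y {a..b} v"
    unfolding gap_potential_def
  proof (intro ballI)
    fix j l assume "j \<in> {a..b}" "l \<in> {a..b}"
    then consider "j \<in> {a, b}" | "l \<in> {a, b}" | "j \<in> {a<..<b}" "l \<in> {a<..<b}"
      unfolding split by blast
    then show "(y j - y l)\<^sup>2 \<le> 2 * (v j + v l)"
    proof cases
      case 2
      then show ?thesis
        using outer[of l j] \<open>j \<in> {a..b}\<close> by (simp add: power2_commute add.commute)
    next
      case 3
      then show ?thesis
        using pot v_inner by (simp add: gap_potential_def)
    qed (use outer \<open>l \<in> {a..b}\<close> in blast)
  qed
  moreover have "2 * (v a + v b) = (y a - y b)\<^sup>2"
    using \<open>a < b\<close> w(3) by (simp add: v_def)
  ultimately show ?thesis
    using that v_inner by blast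
qed

lemma antimono_reflection_potential:
  fixes y :: "nat \<Rightarrow> real"
  assumes "antimono_on {a..b} y"
  shows "\<exists>u. gap_potential y {a..b} u
           \<and> (\<forall>j\<in>{a..b}. 2 * (u j + u (a + b - j)) = (y j - y (a + b - j))\<^sup>2)"
  using assms
proof (induction "b - a" arbitrary: a b rule: less_induct)
  case less
  show ?case
  proof (cases "a < b")
    case False
    then have "j = a \<and> a + b - j = a" if "j \<in> {a..b}" for j
      using that by auto
    then show ?thesis
      by (intro exI[of _ "\<lambda>_. 0"]) (fastforce simp: gap_potential_def)
  next
    case True
    have inner: "{Suc a..b - 1} = {a<..<b}"
      by auto
    have "antimono_on {Suc a..b - 1} y"
      using less.prems by (rule monotone_on_subset) auto
    then obtain u where pot: "gap_potential y {a<..<b} u"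
      and refl: "\<forall>j\<in>{a<..<b}. 2 * (u j + u (Suc a + (b - 1) - j)) = (y j - y (Suc a + (b - 1) - j))\<^sup>2"
      using less.hyps[of "b - 1" "Suc a"] True unfolding inner by fastforce
    obtain v where v: "gap_potential y {a..b} v" "2 * (v a + v b) = (y a - y b)\<^sup>2"
      "\<forall>l\<in>{a<..<b}. v l = u l"
      using gap_potential_extend[OF True less.prems pot] by blast
    have "2 * (v j + v (a + b - j)) = (y j - y (a + b - j))\<^sup>2" if j: "j \<in> {a..b}" for j
    proof -
      consider "j = a" | "j = b" | "j \<in> {a<..<b}"
        using j by fastforce
      then show ?thesis
      proof cases
        case 3
        then have "a + b - j \<in> {a<..<b}" "Suc a + (b - 1) - j = a + b - j"
          by auto
        then show ?thesis
          using refl 3 v(3) by simp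
      qed (use v(2) in \<open>auto simp: power2_commute\<close>)
    qed
    then show ?thesis
      using v(1) by blast
  qed
qed

lemma sum_gap_le_potential:
  fixes y u :: "nat \<Rightarrow> real"
  assumes pot: "gap_potential y A u" and "finite A"
    and "inj_on p C" "inj_on q C" "p ` C \<subseteq> A" "q ` C \<subseteq> A"
  shows "(\<Sum>t\<in>C. (y (p t) - y (q t))\<^sup>2) \<le> 4 * sum u A"
proof -
  have "finite C"
    using assms by (meson finite_imageD finite_subset)
  have "(\<Sum>t\<in>C. (y (p t) - y (q t))\<^sup>2) \<le> (\<Sum>t\<in>C. 2 * (u (p t) + u (q t)))"
    using pot assms(5,6) unfolding gap_potential_def by (intro sum_mono) blast
  also have "\<dots> = 2 * sum u (p ` C) + 2 * sum u (q ` C)"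
    using assms(3,4) by (simp add: sum.distrib sum_distrib_left sum.reindex)
  also have "\<dots> \<le> 2 * sum u A + 2 * sum u A"
    using gap_potential_nonneg[OF pot] assms(2,5,6)
    by (intro add_mono mult_left_mono sum_mono2) auto
  finally show ?thesis
    by simp
qed

lemma antimono_matching_gap_le_reversal:
  fixes y :: "nat \<Rightarrow> real"
  assumes "antimono_on {1..m} y"
    and "inj_on p C" "inj_on q C" "p ` C \<subseteq> {1..m}" "q ` C \<subseteq> {1..m}"
  shows "(\<Sum>t\<in>C. (y (p t) - y (q t))\<^sup>2) \<le> (\<Sum>j=1..m. (y j - y (m + 1 - j))\<^sup>2)"
proof -
  obtain u where pot: "gap_potential y {1..m} u"
    and refl: "\<forall>j\<in>{1..m}. 2 * (u j + u (m + 1 - j)) = (y j - y (m + 1 - j))\<^sup>2"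
    using antimono_reflection_potential[OF assms(1)] by (auto simp: add.commute)
  have "(\<Sum>j=1..m. (y j - y (m + 1 - j))\<^sup>2) = (\<Sum>j=1..m. 2 * (u j + u (m + 1 - j)))"
    using refl by simp
  also have "\<dots> = 2 * sum u {1..m} + 2 * (\<Sum>j=1..m. u (m + 1 - j))"
    by (simp add: sum.distrib sum_distrib_left)
  also have "(\<Sum>j=1..m. u (m + 1 - j)) = sum u {1..m}"
    using sum.atLeastAtMost_rev[of u 1 m] by (simp add: add.commute)
  finally show ?thesis
    using sum_gap_le_potential[OF pot _ assms(2-5)] by simp
qed

lemma squares_dist_midpoint:
  fixes a b c :: real
  shows "(a - c)\<^sup>2 + (b - c)\<^sup>2 = (a - b)\<^sup>2 / 2 + 2 * ((a + b) / 2 - c)\<^sup>2"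
  by (simp add: power2_eq_square field_simps)

lemma mse_one_key_bit:
  "mse 1 y m \<sigma> f
     = ((\<Sum>j=1..m. (y j - f (\<sigma> 1 j))\<^sup>2) + (\<Sum>j=1..m. (y j - f (\<sigma> 2 j))\<^sup>2)) / (2 * real m)"
proof -
  have "{1..2 :: nat} = {1, 2}"
    by auto
  then show ?thesis
    by (simp add: mse_def)
qed

lemma D_ach_le_mse: "D_ach k y m \<sigma> \<le> mse k y m \<sigma> f"
  unfolding D_ach_def
  by (rule cINF_lower) (auto intro!: bdd_belowI[where m = 0] divide_nonneg_nonneg sum_nonneg simp: mse_def)

lemma D_ach_reversal:
  "D_ach 1 y m (reversal m) = (\<Sum>j=1..m. (y j - y (m + 1 - j))\<^sup>2) / (4 * real m)"
proof -
  have mse_rev: "mse 1 y m (reversal m) f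
      = (\<Sum>j=1..m. (y j - f j)\<^sup>2 + (y (m + 1 - j) - f j)\<^sup>2) / (2 * real m)" for f
  proof -
    have "(\<Sum>j=1..m. (y j - f (m + 1 - j))\<^sup>2) = (\<Sum>j=1..m. (y (m + 1 - j) - f j)\<^sup>2)"
      using sum.atLeastAtMost_rev[of "\<lambda>j. (y j - f (m + 1 - j))\<^sup>2" 1 m]
      by (simp add: add.commute)
    then show ?thesis
      unfolding mse_one_key_bit reversal_def by (simp add: sum.distrib)
  qed
  have mse_eq: "mse 1 y m (reversal m) f = (\<Sum>j=1..m. (y j - y (m + 1 - j))\<^sup>2) / (4 * real m)
      + (\<Sum>j=1..m. ((y j + y (m + 1 - j)) / 2 - f j)\<^sup>2) / real m" for f
    unfolding mse_rev squares_dist_midpoint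
    by (simp add: sum.distrib sum_divide_distrib[symmetric] sum_distrib_left[symmetric] add_divide_distrib)
  show ?thesis
  proof (rule antisym)
    show "D_ach 1 y m (reversal m) \<le> (\<Sum>j=1..m. (y j - y (m + 1 - j))\<^sup>2) / (4 * real m)"
      using D_ach_le_mse[of 1 y m "reversal m" "\<lambda>j. (y j + y (m + 1 - j)) / 2"] mse_eq by simp
    show "(\<Sum>j=1..m. (y j - y (m + 1 - j))\<^sup>2) / (4 * real m) \<le> D_ach 1 y m (reversal m)"
      unfolding D_ach_def mse_eq by (intro cINF_greatest) (auto intro!: divide_nonneg_nonneg sum_nonneg)
  qed
qed

lemma D_ach_one_key_bit_le_collisions:
  assumes "is_scheme 1 m r \<sigma>"
  defines "p \<equiv> inv_into {1..m} (\<sigma> 1)" and "q \<equiv> inv_into {1..m} (\<sigma> 2)"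
    and "C \<equiv> \<sigma> 1 ` {1..m} \<inter> \<sigma> 2 ` {1..m}"
  shows "D_ach 1 y m \<sigma> \<le> (\<Sum>t\<in>C. (y (p t) - y (q t))\<^sup>2) / (4 * real m)"
proof -
  define A where "A = {1..m :: nat}"
  define f where "f t = (if t \<in> C then (y (p t) + y (q t)) / 2
                         else if t \<in> \<sigma> 1 ` A then y (p t) else y (q t))" for t
  have key_sum: "(\<Sum>j=1..m. (y j - f (\<sigma> i j))\<^sup>2) = (\<Sum>t\<in>C. (y (g t) - f t)\<^sup>2)"
    if "i \<in> {1, 2}" and g: "g = inv_into A (\<sigma> i)" for i g
  proof -
    have inj: "inj_on (\<sigma> i) A"
      using assms(1) that(1) by (auto simp: is_scheme_def A_def)
    have exact: "f t = y (g t)" if "t \<in> \<sigma> i ` A - C" for t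
      using that \<open>i \<in> {1, 2}\<close> by (auto simp: f_def g p_def q_def C_def A_def)
    have "(\<Sum>j=1..m. (y j - f (\<sigma> i j))\<^sup>2) = (\<Sum>t\<in>\<sigma> i ` A. (y (g t) - f t)\<^sup>2)"
      using inj by (simp add: sum.reindex g A_def)
    also have "\<dots> = (\<Sum>t\<in>C. (y (g t) - f t)\<^sup>2)"
      using exact \<open>i \<in> {1, 2}\<close> by (intro sum.mono_neutral_right) (auto simp: A_def C_def)
    finally show ?thesis .
  qed
  have "(\<Sum>j=1..m. (y j - f (\<sigma> 1 j))\<^sup>2) = (\<Sum>t\<in>C. (y (p t) - f t)\<^sup>2)"
    by (rule key_sum) (simp_all add: p_def A_def)
  moreover have "(\<Sum>j=1..m. (y j - f (\<sigma> 2 j))\<^sup>2) = (\<Sum>t\<in>C. (y (q t) - f t)\<^sup>2)"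
    by (rule key_sum) (simp_all add: q_def A_def)
  ultimately have "mse 1 y m \<sigma> f = (\<Sum>t\<in>C. (y (p t) - f t)\<^sup>2 + (y (q t) - f t)\<^sup>2) / (2 * real m)"
    unfolding mse_one_key_bit by (simp add: sum.distrib)
  also have "\<dots> = (\<Sum>t\<in>C. (y (p t) - y (q t))\<^sup>2) / (4 * real m)"
    unfolding squares_dist_midpoint by (simp add: f_def sum_divide_distrib[symmetric])
  finally show ?thesis
    using D_ach_le_mse[of 1 y m \<sigma> f] by simp
qed

lemma D_max_centrally_symmetric:
  fixes y :: "nat \<Rightarrow> real"
  assumes "m \<ge> 1" and sym: "\<forall>j\<in>{1..m}. y j + y (m + 1 - j) = 2 * c"
  shows "D_max y m = (\<Sum>j=1..m. (y j - y (m + 1 - j))\<^sup>2) / (4 * real m)"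
proof -
  have "(\<Sum>j=1..m. y (m + 1 - j)) = (\<Sum>j=1..m. y j)"
    using sum.atLeastAtMost_rev[of y 1 m] by (simp add: add.commute)
  then have "2 * (\<Sum>j=1..m. y j) = (\<Sum>j=1..m. y j + y (m + 1 - j))"
    by (simp add: sum.distrib)
  also have "\<dots> = 2 * c * real m"
    using sym by simp
  finally have mean: "(\<Sum>j=1..m. y j) / real m = c"
    using assms(1) by simp
  have "(y j - c)\<^sup>2 = (y j - y (m + 1 - j))\<^sup>2 / 4" if "j \<in> {1..m}" for j
  proof -
    have "y j - c = (y j - y (m + 1 - j)) / 2"
      using sym[rule_format, OF that] by (simp add: field_simps)
    then show ?thesis
      by (simp only: power_divide) simp
  qed
  then have "(\<Sum>j=1..m. (y j - c)\<^sup>2) = (\<Sum>j=1..m. (y j - y (m + 1 - j))\<^sup>2 / 4)"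
    by (rule sum.cong[OF refl])
  also have "\<dots> = (\<Sum>j=1..m. (y j - y (m + 1 - j))\<^sup>2) / 4"
    by (rule sum_divide_distrib[symmetric])
  finally have deviation: "(\<Sum>j=1..m. (y j - c)\<^sup>2) = (\<Sum>j=1..m. (y j - y (m + 1 - j))\<^sup>2) / 4" .
  show ?thesis
    unfolding D_max_def Let_def mean deviation by simp
qed

lemma strict_antimono_on_image_eq:
  fixes f g :: "'a::linorder \<Rightarrow> 'b::linorder"
  assumes "finite S" "strict_antimono_on S f" "strict_antimono_on S g" "f ` S = g ` S"
  shows "\<forall>x\<in>S. f x = g x"
  using assms
proof (induction S rule: finite_linorder_min_induct)
  case (insert b A)
  have top: "\<forall>x\<in>A. h x < h b" if "strict_antimono_on (insert b A) h" for h :: "'a \<Rightarrow> 'b"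
    using insert.hyps(2) monotone_onD[OF that] by blast
  have le: "h b \<le> k b" if "h ` insert b A = k ` insert b A" "\<forall>x\<in>A. k x < k b"
    for h k :: "'a \<Rightarrow> 'b"
  proof -
    have "h b \<in> k ` insert b A"
      using that(1) by blast
    then show ?thesis
      using that(2) by (auto intro: less_imp_le)
  qed
  have "f b = g b"
    using le[OF insert.prems(3) top[OF insert.prems(2)]]
      le[OF insert.prems(3)[symmetric] top[OF insert.prems(1)]] by (rule antisym)
  have "h ` A = h ` insert b A - {h b}" if "strict_antimono_on (insert b A) h" for h :: "'a \<Rightarrow> 'b"
    using top[OF that] by auto
  then have "f ` A = g ` A"
    using \<open>f b = g b\<close> insert.prems by metis
  moreover have "strict_antimono_on A f" "strict_antimono_on A g"
    using insert.prems(1,2) by (auto intro: monotone_on_subset)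
  ultimately show ?case
    using insert.IH \<open>f b = g b\<close> by blast
qed simp

lemma arith_prog_reverse:
  fixes a d :: real
  shows "{a + real i * d | i. i < m} = {(a + real (m - 1) * d) + real i * (- d) | i. i < m}"
    (is "?L = ?R")
proof -
  have flip: "a + real i * d = (a + real (m - 1) * d) + real (m - 1 - i) * (- d)" if "i < m" for i
    using that by (simp add: of_nat_diff algebra_simps)
  show ?thesis
  proof (intro equalityI subsetI)
    fix x assume "x \<in> ?L"
    then obtain i where "i < m" "x = a + real i * d"
      by blast
    then show "x \<in> ?R"
      using flip by (intro CollectI exI[of _ "m - 1 - i"]) auto
  next
    fix x assume "x \<in> ?R"
    then obtain i where i: "i < m" "x = (a + real (m - 1) * d) + real i * (- d)"
      by blast
    then have "x = a + real (m - 1 - i) * d"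
      using flip[of "m - 1 - i"] by simp
    then show "x \<in> ?L"
      using i(1) by (intro CollectI exI[of _ "m - 1 - i"]) auto
  qed
qed

lemma arith_prog_image:
  fixes a e :: real
  shows "(\<lambda>j. a + real (j - 1) * e) ` {1..m} = {a + real i * e | i. i < m}"
proof (intro equalityI subsetI)
  fix x assume "x \<in> {a + real i * e | i. i < m}"
  then obtain i where "i < m" "x = a + real (Suc i - 1) * e"
    by auto
  then show "x \<in> (\<lambda>j. a + real (j - 1) * e) ` {1..m}"
    by (intro image_eqI[of _ _ "Suc i"]) auto
next
  fix x assume "x \<in> (\<lambda>j. a + real (j - 1) * e) ` {1..m}"
  then obtain j where "j \<in> {1..m}" "x = a + real (j - 1) * e"
    by blast
  then show "x \<in> {a + real i * e | i. i < m}"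
    by (intro CollectI exI[of _ "j - 1"]) auto
qed

lemma arith_prog_centrally_symmetric:
  fixes y :: "nat \<Rightarrow> real"
  assumes anti: "strict_antimono_on {1..m} y" and ap: "y ` {1..m} = {y0 + real i * d | i. i < m}"
  shows "\<exists>c. \<forall>j\<in>{1..m}. y j + y (m + 1 - j) = 2 * c"
proof -
  obtain a e where "e \<le> 0" and ap': "y ` {1..m} = {a + real i * e | i. i < m}"
  proof (cases "d \<le> 0")
    case False
    then show ?thesis
      using that[of "- d"] ap arith_prog_reverse[of y0 d m] by simp
  qed (use that ap in blast)
  define z where "z j = a + real (j - 1) * e" for j
  have z_image: "z ` {1..m} = {a + real i * e | i. i < m}"
    unfolding z_def by (rule arith_prog_image)
  have y_eq_z: "\<forall>j\<in>{1..m}. y j = z j"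
  proof (cases "e = 0")
    case True
    then show ?thesis
      using ap' z_image by (auto simp: z_def)
  next
    case False
    then have "strict_antimono_on {1..m} z"
      using \<open>e \<le> 0\<close> by (intro monotone_onI) (auto simp: z_def mult_strict_right_mono_neg)
    then show ?thesis
      using strict_antimono_on_image_eq[OF _ anti] ap' z_image by simp
  qed
  have "y j + y (m + 1 - j) = 2 * (a + real (m - 1) * e / 2)" if "j \<in> {1..m}" for j
  proof -
    have "m + 1 - j \<in> {1..m}" and indices: "real (j - 1) + real (m + 1 - j - 1) = real (m - 1)"
      using that by auto
    then have "y j + y (m + 1 - j) = z j + z (m + 1 - j)"
      using y_eq_z that by simp
    also have "\<dots> = 2 * a + (real (j - 1) + real (m + 1 - j - 1)) * e"
      by (simp add: z_def algebra_simps)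
    finally show ?thesis
      unfolding indices by simp
  qed
  then show ?thesis
    by blast
qed

theorem theorem3:
  fixes y :: "nat \<Rightarrow> real" and m :: nat
  assumes "m \<ge> 1"
    and "\<forall>i j. 1 \<le> i \<and> i < j \<and> j \<le> m \<longrightarrow> y j < y i"
  shows "is_scheme 1 m m (reversal m)
         \<and> (\<forall>r \<sigma>. is_scheme 1 m r \<sigma> \<longrightarrow> D_ach 1 y m \<sigma> \<le> D_ach 1 y m (reversal m))
         \<and> ((\<exists>y0 d. y ` {1..m} = {y0 + real i * d | i. i < m})
              \<longrightarrow> D_ach 1 y m (reversal m) = D_max y m)"
proof -
  have anti: "strict_antimono_on {1..m} y"
    using assms(2) by (intro monotone_onI) auto
  have optimal: "D_ach 1 y m \<sigma> \<le> D_ach 1 y m (reversal m)" if "is_scheme 1 m r \<sigma>" for r \<sigma>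
  proof -
    define C where "C = \<sigma> 1 ` {1..m} \<inter> \<sigma> 2 ` {1..m}"
    define p where "p = inv_into {1..m} (\<sigma> 1)"
    define q where "q = inv_into {1..m} (\<sigma> 2)"
    have "D_ach 1 y m \<sigma> \<le> (\<Sum>t\<in>C. (y (p t) - y (q t))\<^sup>2) / (4 * real m)"
      unfolding C_def p_def q_def by (rule D_ach_one_key_bit_le_collisions[OF that])
    also have "\<dots> \<le> (\<Sum>j=1..m. (y j - y (m + 1 - j))\<^sup>2) / (4 * real m)"
      using anti by (intro divide_right_mono antimono_matching_gap_le_reversal)
        (auto simp: strict_antimono_iff_antimono C_def p_def q_def
          intro: inj_on_inv_into inv_into_into)
    also have "\<dots> = D_ach 1 y m (reversal m)"
      by (rule D_ach_reversal[symmetric])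
    finally show ?thesis .
  qed
  have regular: "D_ach 1 y m (reversal m) = D_max y m"
    if ap: "y ` {1..m} = {y0 + real i * d | i. i < m}" for y0 d
  proof -
    obtain c where sym: "\<forall>j\<in>{1..m}. y j + y (m + 1 - j) = 2 * c"
      using arith_prog_centrally_symmetric[OF anti ap] by blast
    show ?thesis
      unfolding D_ach_reversal D_max_centrally_symmetric[OF assms(1) sym] ..
  qed
  have "is_scheme 1 m m (reversal m)"
    by (auto simp: is_scheme_def reversal_def inj_on_def)
  then show ?thesis
    using optimal regular by blast
qed

end
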